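(* In the setting below (two parameters $(B,\theta)$, arbitrary representation of $\mathfrak{su}(2)$, arbitrary pure initial state $|\psi_0\rangle$), the QFIM and Uhlmann matrix are $$\mathcal Q_{BB}=4t^2\,\Delta_0[J_{\mathbf n_\theta}],\quad \mathcal Q_{\theta\theta}=16\sin^2\tfrac{Bt}{2}\,\Delta_0[J_{\mathbf n_1}],\quad \mathcal Q_{B\theta}=-4t\sin\tfrac{Bt}{2}\big(\langle\{J_{\mathbf n_1},J_{\mathbf n_\theta}\}\rangle_0-2\langle J_{\mathbf n_1}\rangle_0\langle J_{\mathbf n_\theta}\rangle_0\big),$$ $\mathcal D_{BB}=\mathcal D_{\theta\theta}=0$, $\mathcal D_{\theta B}=-\mathcal D_{B\theta}=4t\sin\tfrac{Bt}{2}\langle J_{\mathbf n_2}\rangle_0$. Consequently $\det\boldsymbol{\mathcal D}=16t^2\sin^2\tfrac{Bt}{2}\langle J_{\mathbf n_2}\rangle_0^2$, $\det\boldsymbol{\mathcal Q}=16t^2\sin^2\tfrac{Bt}{2}\Big(4\Delta_0[J_{\mathbf n_\theta}]\Delta_0[J_{\mathbf n_1}]-\big(\langle\{J_{\mathbf n_1},J_{\mathbf n_\theta}\}\rangle_0-2\langle J_{\mathbf n_1}\rangle_0\langle J_{\mathbf n_\theta}\rangle_0\big)^2\Big)$, and whenever $\det\boldsymbol{\mathcal Q}\neq0$ the asymptotic incompatibility equals $\mathcal R=\sqrt{\det\boldsymbol{\mathcal D}/\det\boldsymbol{\mathcal Q}}$.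
   Context: $J_x,J_y,J_z$ are Hermitian operators on a finite-dimensional Hilbert space with $[J_x,J_y]=iJ_z$, $[J_y,J_z]=iJ_x$, $[J_z,J_x]=iJ_y$; $J_{\mathbf n}:=n_xJ_x+n_yJ_y+n_zJ_z$. Fix $t\in\mathbb R$, let $H=B(\cos\theta J_x+\sin\theta J_z)$, $U=e^{-itH}$, and $|\psi_{B,\theta}\rangle=U|\psi_0\rangle$ for a unit vector $|\psi_0\rangle$. Let $\mathbf n_\theta=(\cos\theta,0,\sin\theta)$, $\mathbf n_1=(\cos\frac{Bt}{2}\sin\theta,-\sin\frac{Bt}{2},-\cos\frac{Bt}{2}\cos\theta)$, $\mathbf n_2=\mathbf n_\theta\times\mathbf n_1$. Write $\langle X\rangle_0=\langle\psi_0|X|\psi_0\rangle$ and $\Delta_0[X]=\langle X^2\rangle_0-\langle X\rangle_0^2$. With $\mathcal H_l=i(\partial_lU^\dagger)U$ for $l\in\{B,\theta\}$, the quantum Fisher information matrix (QFIM) of this pure unitary model is $\mathcal Q_{ll'}=2\langle\{\mathcal H_l,\mathcal H_{l'}\}\rangle_0-4\langle\mathcal H_l\rangle_0\langle\mathcal H_{l'}\rangle_0$ and the Uhlmann matrix is $\mathcal D_{ll'}=-2i\langle[\mathcal H_l,\mathcal H_{l'}]\rangle_0$ (real, antisymmetric). The asymptotic incompatibility (AI) is $\mathcal R=\max\{|\mu|:\mu \text{ an eigenvalue of }\boldsymbol{\mathcal Q}^{-1}\boldsymbol{\mathcal D}\}$, defined when $\boldsymbol{\mathcal Q}$ is invertible.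 *)

theory Defs
  imports "HOL-Analysis.Analysis"
begin

definition cscale :: "complex \<Rightarrow> complex^'n^'m \<Rightarrow> complex^'n^'m" where
  "cscale c A = (\<chi> i j. c * A$i$j)"

definition cadj :: "complex^'n^'m \<Rightarrow> complex^'m^'n" where
  "cadj A = (\<chi> i j. cnj (A$j$i))"

definition hermitian :: "complex^'n^'n \<Rightarrow> bool" where
  "hermitian A \<longleftrightarrow> cadj A = A"

definition comm :: "complex^'n^'n \<Rightarrow> complex^'n^'n \<Rightarrow> complex^'n^'n" where
  "comm A B = A ** B - B ** A"

definition acomm :: "complex^'n^'n \<Rightarrow> complex^'n^'n \<Rightarrow> complex^'n^'n" where
  "acomm A B = A ** B + B ** A"

definition mpow :: "complex^'n^'n \<Rightarrow> nat \<Rightarrow> complex^'n^'n" where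
  "mpow A k = ((\<lambda>X. A ** X) ^^ k) (mat 1)"

definition mexp :: "complex^'n^'n \<Rightarrow> complex^'n^'n" where
  "mexp A = (\<Sum>k. (1 / fact k) *\<^sub>R mpow A k)"

definition expect :: "complex^'n \<Rightarrow> complex^'n^'n \<Rightarrow> complex" where
  "expect psi X = (\<Sum>i\<in>UNIV. cnj (psi$i) * (X *v psi)$i)"

definition variance :: "complex^'n \<Rightarrow> complex^'n^'n \<Rightarrow> complex" where
  "variance psi X = expect psi (X ** X) - (expect psi X)^2"

definition Jdir :: "complex^'n^'n \<Rightarrow> complex^'n^'n \<Rightarrow> complex^'n^'n \<Rightarrow> real^3 \<Rightarrow> complex^'n^'n" where
  "Jdir Jx Jy Jz n = cscale (of_real (n$1)) Jx + cscale (of_real (n$2)) Jy + cscale (of_real (n$3)) Jz"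

definition Ham :: "complex^'n^'n \<Rightarrow> complex^'n^'n \<Rightarrow> real \<Rightarrow> real \<Rightarrow> complex^'n^'n" where
  "Ham Jx Jz B \<theta> = cscale (of_real B) (cscale (of_real (cos \<theta>)) Jx + cscale (of_real (sin \<theta>)) Jz)"

definition Uop :: "complex^'n^'n \<Rightarrow> complex^'n^'n \<Rightarrow> real \<Rightarrow> real \<Rightarrow> real \<Rightarrow> complex^'n^'n" where
  "Uop Jx Jz t B \<theta> = mexp (cscale (- \<i> * of_real t) (Ham Jx Jz B \<theta>))"

definition gen :: "complex^'n^'n \<Rightarrow> complex^'n^'n \<Rightarrow> real \<Rightarrow> real \<Rightarrow> real \<Rightarrow> 2 \<Rightarrow> complex^'n^'n" where
  "gen Jx Jz t B \<theta> l =
     (if l = 1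
      then cscale \<i> (vector_derivative (\<lambda>b. cadj (Uop Jx Jz t b \<theta>)) (at B) ** Uop Jx Jz t B \<theta>)
      else cscale \<i> (vector_derivative (\<lambda>th. cadj (Uop Jx Jz t B th)) (at \<theta>) ** Uop Jx Jz t B \<theta>))"

text \<open>QFIM and Uhlmann matrix, indexed by 1 = B and 2 = theta.\<close>
definition QFIM :: "complex^'n^'n \<Rightarrow> complex^'n^'n \<Rightarrow> real \<Rightarrow> complex^'n \<Rightarrow> real \<Rightarrow> real \<Rightarrow> complex^2^2" where
  "QFIM Jx Jz t psi0 B \<theta> = (\<chi> l l'.
     2 * expect psi0 (acomm (gen Jx Jz t B \<theta> l) (gen Jx Jz t B \<theta> l'))
     - 4 * expect psi0 (gen Jx Jz t B \<theta> l) * expect psi0 (gen Jx Jz t B \<theta> l'))"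

definition Uhlmann :: "complex^'n^'n \<Rightarrow> complex^'n^'n \<Rightarrow> real \<Rightarrow> complex^'n \<Rightarrow> real \<Rightarrow> real \<Rightarrow> complex^2^2" where
  "Uhlmann Jx Jz t psi0 B \<theta> = (\<chi> l l'.
     - 2 * \<i> * expect psi0 (comm (gen Jx Jz t B \<theta> l) (gen Jx Jz t B \<theta> l')))"

definition is_eigenvalue :: "complex^'k^'k \<Rightarrow> complex \<Rightarrow> bool" where
  "is_eigenvalue M \<mu> \<longleftrightarrow> (\<exists>v. v \<noteq> 0 \<and> M *v v = \<mu> *s v)"

definition AI :: "complex^2^2 \<Rightarrow> complex^2^2 \<Rightarrow> real" where
  "AI Q D = Max {cmod \<mu> | \<mu>. is_eigenvalue (matrix_inv Q ** D) \<mu>}"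

end

theory Submission
  imports Defs
begin

text \<open>
  The su(2) relations make conjugation by \<open>R\<^sub>\<theta> = exp (i\<theta>J\<^sub>y)\<close> a rotation of
  \<open>(J\<^sub>x, J\<^sub>z)\<close>, so \<open>U = R\<^sub>\<theta> exp (-iBtJ\<^sub>x) R\<^sub>\<theta>\<^sup>-\<^sup>1\<close>. Differentiating
  gives the generators \<open>\<H>\<^sub>B = -t J\<^bsub>n\<theta>\<^esub>\<close> and
  \<open>\<H>\<^sub>\<theta> = 2 sin (Bt/2) J\<^bsub>n1\<^esub>\<close>, and the entries of the QFIM and the Uhlmann matrix
  follow by bilinearity of the expectation together with
  \<open>[J\<^bsub>n1\<^esub>, J\<^bsub>n\<theta>\<^esub>] = i J\<^bsub>n1 \<times> n\<theta>\<^esub>\<close>. For a pure state the QFIM is a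
  real Gram matrix and the Uhlmann matrix is real and antisymmetric; for such \<open>2 \<times> 2\<close> matrices
  \<open>(Q\<^sup>-\<^sup>1D)\<^sup>2 = -(det D / det Q) I\<close>, so every eigenvalue of \<open>Q\<^sup>-\<^sup>1D\<close> has
  modulus \<open>\<surd>(det D / det Q)\<close>.
\<close>

section \<open>Exponentials in Banach algebras\<close>

lemma exp_commuting_commutes:
  fixes x y :: "'b::{real_normed_algebra_1,banach}"
  assumes "x * y = y * x"
  shows "exp x * y = y * exp x"
proof -
  have "x ^ n * y = y * x ^ n" for n
    using power_commuting_commutes[OF assms] by simp
  then show ?thesis
    unfolding exp_def
    by (simp add: suminf_mult2[OF summable_exp_generic] suminf_mult[OF summable_exp_generic, symmetric])
qed

lemma exp_conjugate:
  fixes p q x :: "'b::{real_normed_algebra_1,banach}"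
  assumes "q * p = 1" "p * q = 1"
  shows "exp (p * x * q) = p * exp x * q"
proof -
  have "(p * x * q) ^ n = p * x ^ n * q" for n
  proof (induction n)
    case (Suc n)
    have "(p * x * q) ^ Suc n = p * x * (q * p) * x ^ n * q"
      using Suc by (simp add: mult.assoc)
    then show ?case
      using assms by (simp add: mult.assoc)
  qed (use assms in simp)
  then have "(\<lambda>n. (p * x * q) ^ n /\<^sub>R fact n) = (\<lambda>n. p * (x ^ n /\<^sub>R fact n) * q)"
    by simp
  moreover have "(\<Sum>n. p * (x ^ n /\<^sub>R fact n) * q) = p * (\<Sum>n. x ^ n /\<^sub>R fact n) * q"
    by (simp only: suminf_mult2[OF summable_mult[OF summable_exp_generic], symmetric]
        suminf_mult[OF summable_exp_generic])
  ultimately show ?thesis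
    by (simp add: exp_def)
qed

lemma has_vector_derivative_exp_conjugate:
  fixes k :: "'b::{real_normed_algebra_1,banach}"
  assumes "(g has_vector_derivative g') (at a)"
  shows "((\<lambda>s. exp (s *\<^sub>R k) * g s * exp (- (s *\<^sub>R k))) has_vector_derivative
      exp (a *\<^sub>R k) * (k * g a - g a * k + g') * exp (- (a *\<^sub>R k))) (at a)"
proof -
  have "((\<lambda>s. exp (s *\<^sub>R k) * g s * exp (s *\<^sub>R (- k))) has_vector_derivative
      exp (a *\<^sub>R k) * g a * (exp (a *\<^sub>R (- k)) * (- k))
      + (exp (a *\<^sub>R k) * g' + exp (a *\<^sub>R k) * k * g a) * exp (a *\<^sub>R (- k))) (at a)"
    by (intro has_vector_derivative_mult exp_scaleR_has_vector_derivative_right assms)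
  moreover have "exp (a *\<^sub>R (- k)) * k = k * exp (a *\<^sub>R (- k))"
    by (rule exp_commuting_commutes) (simp add: algebra_simps)
  ultimately show ?thesis
    by (simp add: algebra_simps)
qed

lemma exp_conjugate_rotation:
  fixes k x y :: "'b::{real_normed_algebra_1,banach}"
  assumes kx: "k * x - x * k = y" and ky: "k * y - y * k = - x"
  shows "exp (a *\<^sub>R k) * x * exp (- (a *\<^sub>R k)) = cos a *\<^sub>R x + sin a *\<^sub>R y"
proof -
  define g where "g s = cos s *\<^sub>R x + sin s *\<^sub>R y" for s
  \<comment> \<open>Undoing the rotation: \<open>F\<close> has zero derivative, so it keeps its value \<open>x\<close> at \<open>0\<close>.\<close>
  define F where "F s = exp (s *\<^sub>R (- k)) * g s * exp (- (s *\<^sub>R (- k)))" for s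
  have "(F has_vector_derivative 0) (at s within UNIV)" for s
  proof -
    have dg: "(g has_vector_derivative (- sin s *\<^sub>R x + cos s *\<^sub>R y)) (at s)"
      unfolding g_def by (auto intro!: derivative_eq_intros)
    have "(- k) * g s - g s * (- k) + (- sin s *\<^sub>R x + cos s *\<^sub>R y)
        = (cos s *\<^sub>R y - sin s *\<^sub>R x) - cos s *\<^sub>R (k * x - x * k) - sin s *\<^sub>R (k * y - y * k)"
      by (simp add: g_def algebra_simps)
    then have "(- k) * g s - g s * (- k) + (- sin s *\<^sub>R x + cos s *\<^sub>R y) = 0"
      using kx ky by simp
    then show ?thesis
      unfolding F_def using has_vector_derivative_exp_conjugate[OF dg, of "- k"] by simp
  qed
  then obtain c where "\<And>s. F s = c"
    using has_vector_derivative_zero_constant[of UNIV F] by auto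
  then have "F a = F 0"
    by simp
  then have "F a = x"
    by (simp add: F_def g_def)
  have "exp (a *\<^sub>R k) * F a * exp (- (a *\<^sub>R k))
      = (exp (a *\<^sub>R k) * exp (- (a *\<^sub>R k))) * g a * (exp (a *\<^sub>R k) * exp (- (a *\<^sub>R k)))"
    by (simp add: F_def mult.assoc)
  also have "\<dots> = g a"
    by (simp add: exp_minus_inverse)
  finally show ?thesis
    using \<open>F a = x\<close> by (simp add: g_def)
qed

section \<open>Square complex matrices as a Banach algebra\<close>

text \<open>\<open>complex^'a^'a\<close> carries no algebra structure; with the operator norm it becomes a real
  Banach algebra, which makes the library's exponential and its derivative rules available.\<close>

typedef (overloaded) ('a::finite) cmat = "UNIV :: (complex^'a^'a) set"
  morphisms Rep_cmat Abs_cmat by auto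

setup_lifting type_definition_cmat

lemma onorm_matrix_scaleR:
  "onorm (\<lambda>v. (r *\<^sub>R A) *v v) = \<bar>r\<bar> * onorm (\<lambda>v. (A::complex^'n^'m) *v v)"
proof -
  have "(\<lambda>v. (r *\<^sub>R A) *v v) = (\<lambda>v. r *\<^sub>R (A *v v))"
    by (auto simp: vec_eq_iff matrix_vector_mult_def scaleR_sum_right)
  then show ?thesis
    by (simp add: onorm_scaleR)
qed

lemma onorm_matrix_eq_0_iff: "onorm (\<lambda>v. (A::complex^'n^'m) *v v) = 0 \<longleftrightarrow> A = 0"
proof -
  have "onorm (\<lambda>v. A *v v) = 0 \<longleftrightarrow> (\<forall>v. A *v v = 0 *v v)"
    using onorm_eq_0[OF matrix_vector_mul_bounded_linear[of A]] by simp
  then show ?thesis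
    by (simp only: matrix_eq[symmetric])
qed

instantiation cmat :: (finite) real_normed_vector
begin
lift_definition zero_cmat :: "'a cmat" is 0 .
lift_definition plus_cmat :: "'a cmat \<Rightarrow> 'a cmat \<Rightarrow> 'a cmat" is "(+)" .
lift_definition minus_cmat :: "'a cmat \<Rightarrow> 'a cmat \<Rightarrow> 'a cmat" is "(-)" .
lift_definition uminus_cmat :: "'a cmat \<Rightarrow> 'a cmat" is uminus .
lift_definition scaleR_cmat :: "real \<Rightarrow> 'a cmat \<Rightarrow> 'a cmat" is scaleR .
lift_definition norm_cmat :: "'a cmat \<Rightarrow> real" is "\<lambda>A. onorm (\<lambda>v. A *v v)" .
definition dist_cmat :: "'a cmat \<Rightarrow> 'a cmat \<Rightarrow> real" where "dist_cmat a b = norm (a - b)"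
definition sgn_cmat :: "'a cmat \<Rightarrow> 'a cmat" where "sgn_cmat a = inverse (norm a) *\<^sub>R a"
definition uniformity_cmat :: "('a cmat \<times> 'a cmat) filter" where
  "uniformity_cmat = (INF e\<in>{0 <..}. principal {(a, b). dist a b < e})"
definition open_cmat :: "'a cmat set \<Rightarrow> bool" where
  "open_cmat S = (\<forall>a\<in>S. \<forall>\<^sub>F (a', b) in uniformity. a' = a \<longrightarrow> b \<in> S)"
instance
proof
  fix a b :: "'a cmat"
  show "norm (a + b) \<le> norm a + norm b"
  proof transfer
    fix A B :: "complex^'a^'a"
    show "onorm (\<lambda>v. (A + B) *v v) \<le> onorm (\<lambda>v. A *v v) + onorm (\<lambda>v. B *v v)"
      using onorm_triangle[OF matrix_vector_mul_bounded_linear matrix_vector_mul_bounded_linear]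
      by (simp add: matrix_vector_mult_add_rdistrib)
  qed
qed (transfer; simp add: algebra_simps scaleR_right_distrib scaleR_left_distrib
      onorm_matrix_eq_0_iff onorm_matrix_scaleR dist_cmat_def sgn_cmat_def uniformity_cmat_def open_cmat_def)+
end

instantiation cmat :: (finite) real_normed_algebra_1
begin
lift_definition times_cmat :: "'a cmat \<Rightarrow> 'a cmat \<Rightarrow> 'a cmat" is "(**)" .
lift_definition one_cmat :: "'a cmat" is "mat 1" .
instance
proof
  fix a b :: "'a cmat"
  show "(0::'a cmat) \<noteq> 1"
    by transfer (auto simp: vec_eq_iff mat_def)
  show "norm (1::'a cmat) = 1"
    by transfer (simp add: onorm_id)
  have "(\<lambda>v. Rep_cmat (a * b) *v v) = (\<lambda>v. Rep_cmat a *v v) \<circ> (\<lambda>v. Rep_cmat b *v v)"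
    by (auto simp: times_cmat.rep_eq matrix_vector_mul_assoc)
  then show "norm (a * b) \<le> norm a * norm b"
    by (simp add: norm_cmat.rep_eq onorm_compose)
  fix c :: "'a cmat" and r :: real
  show "a * b * c = a * (b * c)" by transfer (simp add: matrix_mul_assoc)
  show "(a + b) * c = a * c + b * c"
    by transfer (simp add: vec_eq_iff matrix_matrix_mult_def distrib_right sum.distrib)
  show "a * (b + c) = a * b + a * c" by transfer (rule matrix_add_ldistrib)
  show "1 * a = a" by transfer simp
  show "a * 1 = a" by transfer simp
  show "r *\<^sub>R a * b = r *\<^sub>R (a * b)"
    by transfer (simp add: vec_eq_iff matrix_matrix_mult_def scaleR_sum_right)
  show "a * r *\<^sub>R b = r *\<^sub>R (a * b)"
    by transfer (simp add: vec_eq_iff matrix_matrix_mult_def scaleR_sum_right)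
qed
end

lemma norm_vec_le_sum_norm: "norm (v::'b::real_normed_vector^'n) \<le> (\<Sum>i\<in>UNIV. norm (v$i))"
  unfolding norm_vec_def by (rule L2_set_le_sum) simp

lemma norm_matrix_entry_le_onorm: "norm ((A::complex^'n^'m) $ i $ j) \<le> onorm (\<lambda>v. A *v v)"
proof -
  have "(norm ((axis j (1::complex) :: complex^'n) $ k))\<^sup>2 = (if k = j then 1 else 0)" for k
    by (simp add: axis_def)
  then have "norm (axis j (1::complex) :: complex^'n) = 1"
    by (simp add: norm_vec_def L2_set_def)
  moreover have "A $ i $ j = (A *v axis j 1) $ i"
    by (simp add: matrix_vector_mult_def axis_def if_distrib cong: if_cong)
  ultimately show ?thesis
    using Finite_Cartesian_Product.norm_nth_le[of "A *v axis j 1" i] onorm[OF matrix_vector_mul_bounded_linear, of A "axis j 1"]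
    by simp
qed

lemma bounded_linear_Rep_cmat: "bounded_linear (Rep_cmat :: 'a::finite cmat \<Rightarrow> complex^'a^'a)"
proof
  fix a b :: "'a cmat" and r :: real
  show "Rep_cmat (a + b) = Rep_cmat a + Rep_cmat b" by transfer simp
  show "Rep_cmat (r *\<^sub>R a) = r *\<^sub>R Rep_cmat a" by transfer simp
  have "norm (Rep_cmat a) \<le> norm a * (CARD('a) * CARD('a))" for a :: "'a cmat"
  proof -
    have "norm (Rep_cmat a) \<le> (\<Sum>i\<in>UNIV. \<Sum>j\<in>UNIV. norm (Rep_cmat a $ i $ j))"
      by (intro order_trans[OF norm_vec_le_sum_norm] sum_mono norm_vec_le_sum_norm)
    also have "\<dots> \<le> (\<Sum>i\<in>(UNIV::'a set). \<Sum>j\<in>(UNIV::'a set). norm a)"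
      by (intro sum_mono) (simp add: norm_cmat.rep_eq norm_matrix_entry_le_onorm)
    finally show ?thesis
      by (simp add: ac_simps)
  qed
  then show "\<exists>K. \<forall>a::'a cmat. norm (Rep_cmat a) \<le> norm a * K"
    by blast
qed

lemma bounded_linear_Abs_cmat: "bounded_linear (Abs_cmat :: complex^'a^'a \<Rightarrow> 'a::finite cmat)"
proof
  fix A B :: "complex^'a^'a" and r :: real
  show "Abs_cmat (A + B) = Abs_cmat A + Abs_cmat B" by transfer simp
  show "Abs_cmat (r *\<^sub>R A) = r *\<^sub>R Abs_cmat A" by transfer simp
  have "bilinear (\<lambda>(A::complex^'a^'a) (v::complex^'a). A *v v)"
    unfolding bilinear_def
    by (auto intro!: linearI simp: matrix_vector_mult_add_rdistrib matrix_vector_right_distrib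
        vec_eq_iff matrix_vector_mult_def scaleR_sum_right distrib_right sum.distrib)
  then obtain K where K: "\<And>A v. norm ((A::complex^'a^'a) *v (v::complex^'a)) \<le> norm A * norm v * K"
    and "K > 0"
    using bilinear_conv_bounded_bilinear bounded_bilinear.pos_bounded by blast
  then have "norm (Abs_cmat A) \<le> norm A * K" for A :: "complex^'a^'a"
    by (auto simp: norm_cmat.abs_eq intro!: onorm_bound simp: mult.commute mult.left_commute K)
  then show "\<exists>K. \<forall>A::complex^'a^'a. norm (Abs_cmat A) \<le> norm A * K"
    by blast
qed

instance cmat :: (finite) banach
proof
  fix X :: "nat \<Rightarrow> 'a cmat"
  assume "Cauchy X"
  then have "Cauchy (\<lambda>n. Rep_cmat (X n))"
    by (rule bounded_linear.Cauchy[OF bounded_linear_Rep_cmat])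
  then obtain L where "(\<lambda>n. Rep_cmat (X n)) \<longlonglongrightarrow> L"
    using convergent_eq_Cauchy by blast
  then have "X \<longlonglongrightarrow> Abs_cmat L"
    using bounded_linear.tendsto[OF bounded_linear_Abs_cmat] by (fastforce simp: Rep_cmat_inverse)
  then show "convergent X"
    by (auto simp: convergent_def)
qed

lift_definition cmat_scalar :: "complex \<Rightarrow> 'a::finite cmat" is mat .

lift_definition cmat_adj :: "'a::finite cmat \<Rightarrow> 'a cmat" is cadj .

lemma mat_matrix_mult_entry: "(mat c ** A) $ i $ j = c * (A::'b::comm_ring_1^'n^'m) $ i $ j"
proof -
  have "(if i = k then c else 0) * A $ k $ j = (if i = k then c * A $ k $ j else 0)" for k
    by simp
  then show ?thesis
    by (simp add: matrix_matrix_mult_def mat_def sum.delta)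
qed

lemma matrix_mult_mat_entry: "(A ** mat c) $ i $ j = (A::'b::comm_ring_1^'n^'m) $ i $ j * c"
proof -
  have "A $ i $ k * (if k = j then c else 0) = (if k = j then A $ i $ k * c else 0)" for k
    by simp
  then show ?thesis
    by (simp add: matrix_matrix_mult_def mat_def sum.delta)
qed

lemma cscale_eq_mat_mult: "cscale c A = mat c ** A"
  by (simp add: cscale_def vec_eq_iff mat_matrix_mult_entry)

lemma Abs_cmat_cscale: "Abs_cmat (cscale c A) = cmat_scalar c * Abs_cmat A"
  by (simp add: cscale_eq_mat_mult cmat_scalar.abs_eq times_cmat.abs_eq)

lemma cmat_scalar_commute: "cmat_scalar c * a = a * cmat_scalar c"
  by transfer (simp add: vec_eq_iff mat_matrix_mult_entry matrix_mult_mat_entry mult.commute)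

lemma cmat_scalar_mult: "cmat_scalar c * cmat_scalar d = cmat_scalar (c * d)"
  by transfer (simp add: vec_eq_iff mat_matrix_mult_entry, simp add: mat_def)

lemma cmat_scalar_of_real: "cmat_scalar (of_real r) = r *\<^sub>R 1"
  by transfer (auto simp: vec_eq_iff mat_def complex_eq_iff)

lemma cmat_scalar_minus_one: "cmat_scalar (- 1) = - 1"
  using cmat_scalar_of_real[of "- 1"] by simp

lemma cmat_scalar_uminus: "cmat_scalar (- c) = - cmat_scalar c"
  by transfer (simp add: vec_eq_iff mat_def)

lemma cmat_adj_mult: "cmat_adj (a * b) = cmat_adj b * cmat_adj a"
  by transfer (simp add: cadj_def vec_eq_iff matrix_matrix_mult_def mult.commute)

lemma cmat_adj_add: "cmat_adj (a + b) = cmat_adj a + cmat_adj b"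
  by transfer (simp add: cadj_def vec_eq_iff)

lemma cmat_adj_scaleR: "cmat_adj (r *\<^sub>R a) = r *\<^sub>R cmat_adj a"
  by transfer (simp add: cadj_def vec_eq_iff)

lemma cmat_adj_scalar: "cmat_adj (cmat_scalar c) = cmat_scalar (cnj c)"
  by transfer (simp add: cadj_def vec_eq_iff mat_def)

lemma cmat_adj_one: "cmat_adj 1 = 1"
  by transfer (simp add: cadj_def vec_eq_iff mat_def)

lemma cmat_adj_power: "cmat_adj (a ^ n) = cmat_adj a ^ n"
proof (induction n)
  case (Suc n)
  have "cmat_adj (a ^ Suc n) = cmat_adj (a ^ n * a)"
    by (simp only: power_Suc2)
  also have "\<dots> = cmat_adj a ^ Suc n"
    by (simp only: cmat_adj_mult Suc power_Suc)
  finally show ?case .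
qed (simp add: cmat_adj_one)

lemma bounded_linear_cmat_adj: "bounded_linear (cmat_adj :: 'a::finite cmat \<Rightarrow> 'a cmat)"
proof -
  have "linear (cadj :: complex^'a^'a \<Rightarrow> complex^'a^'a)"
    by (rule linearI) (simp_all add: cadj_def vec_eq_iff)
  then have "bounded_linear (cadj :: complex^'a^'a \<Rightarrow> complex^'a^'a)"
    using linear_conv_bounded_linear by blast
  then have "bounded_linear (\<lambda>a::'a cmat. Abs_cmat (cadj (Rep_cmat a)))"
    by (intro bounded_linear_compose[OF bounded_linear_Abs_cmat] bounded_linear_compose[OF _ bounded_linear_Rep_cmat])
  moreover have "(\<lambda>a. Abs_cmat (cadj (Rep_cmat a))) = cmat_adj"
    by (rule ext) (metis Rep_cmat_inverse cmat_adj.rep_eq)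
  ultimately show ?thesis
    by metis
qed

lemma cmat_adj_exp: "cmat_adj (exp a) = exp (cmat_adj a)"
proof -
  have "cmat_adj (exp a) = (\<Sum>n. cmat_adj (a ^ n /\<^sub>R fact n))"
    unfolding exp_def by (rule bounded_linear.suminf[OF bounded_linear_cmat_adj summable_exp_generic])
  then show ?thesis
    by (simp only: cmat_adj_scaleR cmat_adj_power exp_def)
qed

lemma mexp_eq_exp: "mexp A = Rep_cmat (exp (Abs_cmat A))"
proof -
  have pow: "Rep_cmat (Abs_cmat A ^ k) = mpow A k" for k
    by (induction k) (simp_all add: mpow_def times_cmat.rep_eq one_cmat.rep_eq Abs_cmat_inverse)
  have "(\<lambda>n. Abs_cmat A ^ n /\<^sub>R fact n) sums exp (Abs_cmat A)"
    unfolding exp_def by (rule summable_sums[OF summable_exp_generic])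
  from bounded_linear.sums[OF bounded_linear_Rep_cmat this]
  have "(\<lambda>n. mpow A n /\<^sub>R fact n) sums Rep_cmat (exp (Abs_cmat A))"
    by (simp only: scaleR_cmat.rep_eq pow)
  moreover have "(\<lambda>n. (1 / fact n) *\<^sub>R mpow A n) = (\<lambda>n. mpow A n /\<^sub>R fact n)"
    by (simp add: divide_inverse)
  ultimately show ?thesis
    unfolding mexp_def by (simp add: sums_iff)
qed

section \<open>su(2) triples\<close>

text \<open>The central square root \<open>\<iota>\<close> of \<open>-1\<close> stands for the imaginary unit, so that
  the operators \<open>x, y, z\<close> satisfy \<open>[x, y] = \<iota> z\<close> etc.; \<open>rot \<theta>\<close> is the rotation
  about the \<open>y\<close>-axis and \<open>propagator (-Bt) \<theta>\<close> is the evolution operator \<open>U\<close>.\<close>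

locale su2_triple =
  fixes \<iota> x y z :: "'b::{real_normed_algebra_1,banach}"
  assumes iota_mult_iota: "\<iota> * \<iota> = - 1"
    and iota_commute: "\<And>w. \<iota> * w = w * \<iota>"
    and comm_xy: "x * y - y * x = \<iota> * z"
    and comm_yz: "y * z - z * y = \<iota> * x"
    and comm_zx: "z * x - x * z = \<iota> * y"
begin

lemma iota_left_commute: "w * (\<iota> * v) = \<iota> * (w * v)"
  by (metis iota_commute mult.assoc)

lemma iota_iota: "\<iota> * (\<iota> * v) = - v"
  by (metis iota_mult_iota mult.assoc mult_minus_left mult_1)

definition spin :: "real^3 \<Rightarrow> 'b" where
  "spin n = n$1 *\<^sub>R x + n$2 *\<^sub>R y + n$3 *\<^sub>R z"

lemma spin_commutator: "spin a * spin b - spin b * spin a = \<iota> * spin (cross3 a b)"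
proof -
  have "spin a * spin b - spin b * spin a =
      (a$1 * b$2 - a$2 * b$1) *\<^sub>R (x * y - y * x) + (a$2 * b$3 - a$3 * b$2) *\<^sub>R (y * z - z * y)
      + (a$3 * b$1 - a$1 * b$3) *\<^sub>R (z * x - x * z)"
    by (simp add: spin_def algebra_simps)
  then show ?thesis
    by (simp add: comm_xy comm_yz comm_zx spin_def cross3_def algebra_simps iota_left_commute)
qed

definition rot :: "real \<Rightarrow> 'b" where
  "rot \<theta> = exp (\<theta> *\<^sub>R (\<iota> * y))"

lemma rot_inverse: "rot \<theta> * rot (- \<theta>) = 1"
  by (simp add: rot_def exp_minus_inverse)

lemma rot_inverse': "rot (- \<theta>) * rot \<theta> = 1"
  using exp_minus_inverse[of "- (\<theta> *\<^sub>R (\<iota> * y))"] by (simp add: rot_def)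

lemma iota_commutator: "(\<iota> * a) * b - b * (\<iota> * a) = \<iota> * (a * b - b * a)"
  by (simp add: mult.assoc iota_left_commute right_diff_distrib)

lemma rot_conj_x: "rot \<theta> * x * rot (- \<theta>) = cos \<theta> *\<^sub>R x + sin \<theta> *\<^sub>R z"
proof -
  have "y * x - x * y = - (\<iota> * z)"
    by (metis comm_xy minus_diff_eq)
  then have "(\<iota> * y) * x - x * (\<iota> * y) = z"
    by (simp add: iota_commutator iota_iota)
  moreover have "(\<iota> * y) * z - z * (\<iota> * y) = - x"
    by (simp add: iota_commutator comm_yz iota_iota)
  ultimately show ?thesis
    unfolding rot_def using exp_conjugate_rotation by simp
qed

lemma rot_conj_z: "rot \<theta> * z * rot (- \<theta>) = cos \<theta> *\<^sub>R z - sin \<theta> *\<^sub>R x"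
proof -
  have "(\<iota> * y) * z - z * (\<iota> * y) = - x"
    by (simp add: iota_commutator comm_yz iota_iota)
  moreover have "(\<iota> * y) * (- x) - (- x) * (\<iota> * y) = - z"
    by (metis comm_xy iota_commutator iota_iota minus_diff_eq mult_minus_left mult_minus_right)
  ultimately show ?thesis
    unfolding rot_def using exp_conjugate_rotation[of "\<iota> * y" z "- x"] by simp
qed

lemma rot_conj_y: "rot \<theta> * y * rot (- \<theta>) = y"
proof -
  have "rot \<theta> * y = y * rot \<theta>"
    unfolding rot_def by (rule exp_commuting_commutes) (simp add: mult.assoc iota_left_commute)
  then show ?thesis
    by (simp add: mult.assoc rot_inverse)
qed

lemma exp_conj_y: "exp (a *\<^sub>R (\<iota> * x)) * y * exp (- (a *\<^sub>R (\<iota> * x))) = cos a *\<^sub>R y - sin a *\<^sub>R z"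
proof -
  have "(\<iota> * x) * y - y * (\<iota> * x) = - z"
    by (simp add: iota_commutator comm_xy iota_iota)
  moreover have "(\<iota> * x) * (- z) - (- z) * (\<iota> * x) = - y"
    by (metis comm_zx iota_commutator iota_iota minus_diff_eq mult_minus_left mult_minus_right)
  ultimately show ?thesis
    using exp_conjugate_rotation[of "\<iota> * x" y "- z"] by simp
qed

definition propagator :: "real \<Rightarrow> real \<Rightarrow> 'b" where
  "propagator s \<theta> = exp (s *\<^sub>R (\<iota> * spin (vector [cos \<theta>, 0, sin \<theta>])))"

lemma propagator_inverse: "propagator s \<theta> * propagator (- s) \<theta> = 1"
  by (simp add: propagator_def exp_minus_inverse)

lemma propagator_eq_rot_conj: "propagator s \<theta> = rot \<theta> * exp (s *\<^sub>R (\<iota> * x)) * rot (- \<theta>)"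
proof -
  have "s *\<^sub>R (\<iota> * spin (vector [cos \<theta>, 0, sin \<theta>])) = rot \<theta> * (s *\<^sub>R (\<iota> * x)) * rot (- \<theta>)"
    by (simp add: spin_def flip: rot_conj_x) (simp add: mult.assoc iota_left_commute)
  then show ?thesis
    unfolding propagator_def by (simp only: exp_conjugate[OF rot_inverse' rot_inverse])
qed

lemma has_vector_derivative_propagator_scale:
  "((\<lambda>b. propagator (b * t) \<theta>) has_vector_derivative
     t *\<^sub>R (propagator (B * t) \<theta> * (\<iota> * spin (vector [cos \<theta>, 0, sin \<theta>])))) (at B)"
  using exp_scaleR_has_vector_derivative_right[of "t *\<^sub>R (\<iota> * spin (vector [cos \<theta>, 0, sin \<theta>]))" B]
  by (simp add: propagator_def mult.commute)

lemma has_vector_derivative_propagator_angle: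
  "((\<lambda>\<theta>. propagator s \<theta>) has_vector_derivative
     rot \<theta> * ((\<iota> * y) * exp (s *\<^sub>R (\<iota> * x)) - exp (s *\<^sub>R (\<iota> * x)) * (\<iota> * y)) * rot (- \<theta>)) (at \<theta>)"
  using has_vector_derivative_exp_conjugate[of "\<lambda>_. exp (s *\<^sub>R (\<iota> * x))" 0 \<theta> "\<iota> * y",
      OF has_vector_derivative_const]
  by (simp add: propagator_eq_rot_conj rot_def)

lemma generator_scale:
  "\<iota> * (t *\<^sub>R (propagator (B * t) \<theta> * (\<iota> * spin (vector [cos \<theta>, 0, sin \<theta>]))))
     * propagator (- (B * t)) \<theta> = - (t *\<^sub>R spin (vector [cos \<theta>, 0, sin \<theta>]))"
proof -
  let ?K = "\<iota> * spin (vector [cos \<theta>, 0, sin \<theta>])"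
  have "propagator (B * t) \<theta> * ?K = ?K * propagator (B * t) \<theta>"
    unfolding propagator_def by (rule exp_commuting_commutes) simp
  then have "\<iota> * (t *\<^sub>R (propagator (B * t) \<theta> * ?K)) * propagator (- (B * t)) \<theta>
      = t *\<^sub>R (\<iota> * ?K * (propagator (B * t) \<theta> * propagator (- (B * t)) \<theta>))"
    by (simp add: mult.assoc)
  then show ?thesis
    by (simp add: propagator_inverse iota_iota mult.assoc)
qed

lemma rot_cancel_left: "rot (- \<theta>) * (rot \<theta> * w) = w"
  by (simp add: mult.assoc[symmetric] rot_inverse')

lemma iota_mult_rot_conj:
  assumes "W * V' = \<iota> * V"
  shows "\<iota> * (rot \<theta> * W * rot (- \<theta>)) * (rot \<theta> * V' * rot (- \<theta>)) = - (rot \<theta> * V * rot (- \<theta>))"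
proof -
  have "\<iota> * (rot \<theta> * W * rot (- \<theta>)) * (rot \<theta> * V' * rot (- \<theta>))
      = \<iota> * (rot \<theta> * (W * V') * rot (- \<theta>))"
    by (simp add: mult.assoc rot_cancel_left)
  also have "rot \<theta> * (W * V') * rot (- \<theta>) = \<iota> * (rot \<theta> * V * rot (- \<theta>))"
    using assms by (simp add: mult.assoc iota_left_commute)
  finally show ?thesis
    by (simp add: iota_iota)
qed

lemma generator_angle:
  fixes s \<theta> :: real
  defines "C \<equiv> exp (s *\<^sub>R (\<iota> * x))"
  shows "\<iota> * (rot \<theta> * ((\<iota> * y) * C - C * (\<iota> * y)) * rot (- \<theta>)) * propagator (- s) \<theta>
    = (2 * sin (s / 2)) *\<^sub>R spin (vector [cos (s / 2) * sin \<theta>, - sin (s / 2), - cos (s / 2) * cos \<theta>])"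
proof -
  let ?C' = "exp (- (s *\<^sub>R (\<iota> * x)))"
  have "C * ?C' = 1"
    by (simp add: C_def exp_minus_inverse)
  then have "((\<iota> * y) * C - C * (\<iota> * y)) * ?C' = \<iota> * (y - C * y * ?C')"
    by (simp add: left_diff_distrib right_diff_distrib mult.assoc iota_left_commute)
  also have "C * y * ?C' = cos s *\<^sub>R y - sin s *\<^sub>R z"
    unfolding C_def by (rule exp_conj_y)
  finally have A: "((\<iota> * y) * C - C * (\<iota> * y)) * ?C' = \<iota> * (y - (cos s *\<^sub>R y - sin s *\<^sub>R z))" .
  have P: "propagator (- s) \<theta> = rot \<theta> * ?C' * rot (- \<theta>)"
    by (simp add: propagator_eq_rot_conj)
  have "\<iota> * (rot \<theta> * ((\<iota> * y) * C - C * (\<iota> * y)) * rot (- \<theta>)) * propagator (- s) \<theta>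
      = - (rot \<theta> * (y - (cos s *\<^sub>R y - sin s *\<^sub>R z)) * rot (- \<theta>))"
    unfolding P by (rule iota_mult_rot_conj[OF A])
  also have "\<dots> = - (rot \<theta> * y * rot (- \<theta>) - cos s *\<^sub>R (rot \<theta> * y * rot (- \<theta>)) + sin s *\<^sub>R (rot \<theta> * z * rot (- \<theta>)))"
    by (simp add: algebra_simps)
  also have "\<dots> = - ((1 - cos s) *\<^sub>R y + sin s *\<^sub>R (cos \<theta> *\<^sub>R z - sin \<theta> *\<^sub>R x))"
    unfolding rot_conj_y rot_conj_z by (simp add: algebra_simps)
  also have "\<dots> = (2 * sin (s / 2)) *\<^sub>R spin (vector [cos (s / 2) * sin \<theta>, - sin (s / 2), - cos (s / 2) * cos \<theta>])"
  proof -
    have c: "cos s = 1 - 2 * sin (s / 2) ^ 2" and sn: "sin s = 2 * sin (s / 2) * cos (s / 2)"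
      using cos_double_sin[of "s / 2"] sin_double[of "s / 2"] by simp_all
    show ?thesis
      unfolding c sn by (simp add: spin_def algebra_simps power2_eq_square)
  qed
  finally show ?thesis .
qed

end

section \<open>The generators of the two-parameter model\<close>

lemma cscale_of_real: "cscale (of_real r) A = r *\<^sub>R A"
proof -
  have "of_real r * A $ i $ j = r *\<^sub>R A $ i $ j" for i j
    by (simp add: scaleR_conv_of_real)
  then show ?thesis
    by (simp add: cscale_def vec_eq_iff)
qed

lemma Rep_cmat_scalar_mult: "Rep_cmat (cmat_scalar c * a) = cscale c (Rep_cmat a)"
  by (simp add: times_cmat.rep_eq cmat_scalar.rep_eq cscale_eq_mat_mult)

lemma cscale_Rep_cmat_mult: "cscale c (Rep_cmat a ** Rep_cmat b) = Rep_cmat (cmat_scalar c * a * b)"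
  by (simp add: times_cmat.rep_eq cmat_scalar.rep_eq cscale_eq_mat_mult matrix_mul_assoc)

lemma Abs_cmat_comm: "Abs_cmat (comm A B) = Abs_cmat A * Abs_cmat B - Abs_cmat B * Abs_cmat A"
  by (simp add: comm_def minus_cmat.abs_eq times_cmat.abs_eq)

lemma vector_derivative_Rep_cmat:
  assumes "(f has_vector_derivative f') (at t)"
  shows "vector_derivative (\<lambda>s. Rep_cmat (f s)) (at t) = Rep_cmat f'"
  using bounded_linear.has_vector_derivative[OF bounded_linear_Rep_cmat assms]
  by (rule vector_derivative_at)

locale su2_matrices =
  fixes Jx Jy Jz :: "complex^'a::finite^'a"
  assumes hermitian_J: "hermitian Jx" "hermitian Jy" "hermitian Jz"
    and comm_J: "comm Jx Jy = cscale \<i> Jz" "comm Jy Jz = cscale \<i> Jx" "comm Jz Jx = cscale \<i> Jy"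

sublocale su2_matrices \<subseteq> su2_triple "cmat_scalar \<i>" "Abs_cmat Jx" "Abs_cmat Jy" "Abs_cmat Jz"
proof
  show "cmat_scalar \<i> * cmat_scalar \<i> = (- 1 :: 'a cmat)"
    by (simp add: cmat_scalar_mult cmat_scalar_minus_one)
  show "cmat_scalar \<i> * w = w * cmat_scalar \<i>" for w :: "'a cmat"
    by (rule cmat_scalar_commute)
qed (simp_all flip: Abs_cmat_comm Abs_cmat_cscale add: comm_J)

context su2_matrices
begin

lemma Jdir_eq_spin: "Jdir Jx Jy Jz n = Rep_cmat (spin n)"
  by (simp add: Jdir_def spin_def cscale_of_real plus_cmat.rep_eq scaleR_cmat.rep_eq Abs_cmat_inverse)

lemma cmat_adj_spin: "cmat_adj (spin n) = spin n"
proof -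
  have "cmat_adj (Abs_cmat J) = Abs_cmat J" if "hermitian J" for J :: "complex^'a^'a"
    using that by (simp add: hermitian_def cmat_adj.abs_eq)
  then show ?thesis
    using hermitian_J by (simp add: spin_def cmat_adj_add cmat_adj_scaleR)
qed

lemma hermitian_Jdir: "hermitian (Jdir Jx Jy Jz n)"
  by (simp add: hermitian_def Jdir_eq_spin flip: cmat_adj.rep_eq add: cmat_adj_spin)

lemma Uop_eq_propagator: "Uop Jx Jz t B \<theta> = Rep_cmat (propagator (- (B * t)) \<theta>)"
proof -
  have "cmat_scalar (- \<i> * of_real t) = cmat_scalar (of_real (- t)) * cmat_scalar \<i>"
    by (simp add: cmat_scalar_mult mult.commute)
  then have scalar: "cmat_scalar (- \<i> * of_real t) = (- t) *\<^sub>R cmat_scalar \<i>"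
    by (simp only: cmat_scalar_of_real) simp
  have "Abs_cmat (cscale (- \<i> * of_real t) (Ham Jx Jz B \<theta>))
      = (- (B * t)) *\<^sub>R (cmat_scalar \<i> * spin (vector [cos \<theta>, 0, sin \<theta>]))"
    unfolding Ham_def cscale_of_real Abs_cmat_cscale scalar
    by (simp add: spin_def flip: plus_cmat.abs_eq scaleR_cmat.abs_eq)
  then show ?thesis
    by (simp add: Uop_def mexp_eq_exp propagator_def)
qed

lemma cmat_adj_propagator: "cmat_adj (propagator s \<theta>) = propagator (- s) \<theta>"
proof -
  have "cmat_adj (cmat_scalar \<i> * spin n) = - (cmat_scalar \<i> * spin n)" for n
    by (simp add: cmat_adj_mult cmat_adj_spin cmat_adj_scalar cmat_scalar_uminus iota_commute)
  then show ?thesis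
    by (simp add: propagator_def cmat_adj_exp cmat_adj_scaleR)
qed

lemma cadj_Uop: "cadj (Uop Jx Jz t B \<theta>) = Rep_cmat (propagator (B * t) \<theta>)"
  by (simp add: Uop_eq_propagator cmat_adj_propagator flip: cmat_adj.rep_eq)

lemma gen_scale: "gen Jx Jz t B \<theta> 1 = (- t) *\<^sub>R Jdir Jx Jy Jz (vector [cos \<theta>, 0, sin \<theta>])"
proof -
  have "vector_derivative (\<lambda>b. cadj (Uop Jx Jz t b \<theta>)) (at B)
      = Rep_cmat (t *\<^sub>R (propagator (B * t) \<theta> * (cmat_scalar \<i> * spin (vector [cos \<theta>, 0, sin \<theta>]))))"
    unfolding cadj_Uop by (rule vector_derivative_Rep_cmat[OF has_vector_derivative_propagator_scale])
  moreover have "gen Jx Jz t B \<theta> 1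
      = cscale \<i> (vector_derivative (\<lambda>b. cadj (Uop Jx Jz t b \<theta>)) (at B) ** Uop Jx Jz t B \<theta>)"
    by (simp add: gen_def)
  ultimately have "gen Jx Jz t B \<theta> 1 = Rep_cmat (cmat_scalar \<i>
      * (t *\<^sub>R (propagator (B * t) \<theta> * (cmat_scalar \<i> * spin (vector [cos \<theta>, 0, sin \<theta>]))))
      * propagator (- (B * t)) \<theta>)"
    by (simp only: Uop_eq_propagator cscale_Rep_cmat_mult)
  then show ?thesis
    by (simp only: generator_scale Jdir_eq_spin uminus_cmat.rep_eq scaleR_cmat.rep_eq) simp
qed

lemma gen_angle: "gen Jx Jz t B \<theta> 2 = (2 * sin (B * t / 2)) *\<^sub>R
    Jdir Jx Jy Jz (vector [cos (B * t / 2) * sin \<theta>, - sin (B * t / 2), - cos (B * t / 2) * cos \<theta>])"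
proof -
  let ?C = "exp ((B * t) *\<^sub>R (cmat_scalar \<i> * Abs_cmat Jx))"
  have "vector_derivative (\<lambda>\<theta>. cadj (Uop Jx Jz t B \<theta>)) (at \<theta>)
      = Rep_cmat (rot \<theta> * ((cmat_scalar \<i> * Abs_cmat Jy) * ?C - ?C * (cmat_scalar \<i> * Abs_cmat Jy)) * rot (- \<theta>))"
    unfolding cadj_Uop by (rule vector_derivative_Rep_cmat[OF has_vector_derivative_propagator_angle])
  moreover have "gen Jx Jz t B \<theta> 2
      = cscale \<i> (vector_derivative (\<lambda>\<theta>. cadj (Uop Jx Jz t B \<theta>)) (at \<theta>) ** Uop Jx Jz t B \<theta>)"
    by (simp add: gen_def)
  ultimately have "gen Jx Jz t B \<theta> 2 = Rep_cmat (cmat_scalar \<i>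
      * (rot \<theta> * ((cmat_scalar \<i> * Abs_cmat Jy) * ?C - ?C * (cmat_scalar \<i> * Abs_cmat Jy)) * rot (- \<theta>))
      * propagator (- (B * t)) \<theta>)"
    by (simp only: Uop_eq_propagator cscale_Rep_cmat_mult)
  then show ?thesis
    by (simp only: generator_angle Jdir_eq_spin scaleR_cmat.rep_eq)
qed

lemma comm_Jdir: "comm (Jdir Jx Jy Jz a) (Jdir Jx Jy Jz b) = cscale \<i> (Jdir Jx Jy Jz (cross3 a b))"
  by (simp add: comm_def Jdir_eq_spin spin_commutator Rep_cmat_scalar_mult
      flip: times_cmat.rep_eq minus_cmat.rep_eq)

end

section \<open>Expectations, QFIM and Uhlmann matrix\<close>

lemma expect_add: "expect psi (A + B) = expect psi A + expect psi B"
  by (simp add: expect_def matrix_vector_mult_add_rdistrib distrib_left sum.distrib)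

lemma expect_cscale: "expect psi (cscale c A) = c * expect psi A"
proof -
  have "cscale c A *v psi = c *s (A *v psi)"
    by (simp add: cscale_def vec_eq_iff matrix_vector_mult_def sum_distrib_left mult.assoc)
  then show ?thesis
    by (simp add: expect_def sum_distrib_left mult.left_commute)
qed

lemma expect_scaleR: "expect psi (r *\<^sub>R A) = of_real r * expect psi A"
  using expect_cscale[of psi "of_real r" A] by (simp add: cscale_of_real)

lemma expect_uminus: "expect psi (- A) = - expect psi A"
  using expect_scaleR[of psi "- 1" A] by simp

lemma expect_diff: "expect psi (A - B) = expect psi A - expect psi B"
  by (simp add: expect_def matrix_vector_mult_diff_rdistrib right_diff_distrib sum_subtractf)

lemma expect_zero: "expect psi 0 = 0"
  by (simp add: expect_def)

lemma scaleR_matrix_mult_left: "(r *\<^sub>R A) ** B = r *\<^sub>R (A ** (B::complex^'n^'m))"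
  by (simp add: vec_eq_iff matrix_matrix_mult_def scaleR_sum_right)

lemma scaleR_matrix_mult_right: "A ** (r *\<^sub>R B) = r *\<^sub>R (A ** (B::complex^'n^'m))"
  by (simp add: vec_eq_iff matrix_matrix_mult_def scaleR_sum_right)

lemma acomm_scaleR: "acomm (r *\<^sub>R A) (s *\<^sub>R B) = (r * s) *\<^sub>R acomm A B"
  by (simp add: acomm_def scaleR_matrix_mult_left scaleR_matrix_mult_right scaleR_add_right)

lemma comm_scaleR: "comm (r *\<^sub>R A) (s *\<^sub>R B) = (r * s) *\<^sub>R comm A B"
  by (simp add: comm_def scaleR_matrix_mult_left scaleR_matrix_mult_right scaleR_diff_right)

lemma acomm_commute: "acomm A B = acomm B A"
  by (simp add: acomm_def add.commute)

lemma comm_anticommute: "comm A B = - comm B A"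
  by (simp add: comm_def)

lemma variance_scaleR: "variance psi (r *\<^sub>R A) = (of_real r)\<^sup>2 * variance psi A"
  by (simp add: variance_def scaleR_matrix_mult_left scaleR_matrix_mult_right expect_scaleR
      power2_eq_square algebra_simps)

lemma QFIM_formula_diag: "2 * expect psi (acomm A A) - 4 * expect psi A * expect psi A = 4 * variance psi A"
  by (simp only: acomm_def variance_def expect_add) (simp add: power2_eq_square)

lemma hermitian_scaleR: "hermitian A \<Longrightarrow> hermitian (r *\<^sub>R A)"
  by (simp add: hermitian_def cadj_def vec_eq_iff)

definition cinner :: "complex^'n \<Rightarrow> complex^'n \<Rightarrow> complex" where
  "cinner a b = (\<Sum>i\<in>UNIV. cnj (a$i) * b$i)"

lemma expect_eq_cinner: "expect psi X = cinner psi (X *v psi)"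
  by (simp add: expect_def cinner_def)

lemma cinner_cnj: "cnj (cinner a b) = cinner b a"
  by (simp add: cinner_def mult.commute)

lemma Re_cinner: "Re (cinner a b) = inner a b"
  by (simp add: cinner_def inner_vec_def inner_complex_def Re_sum)

lemma cinner_self: "norm a = 1 \<Longrightarrow> cinner a a = 1"
  using cinner_cnj[of a a] Re_cinner[of a a]
  by (simp add: complex_eq_iff power2_norm_eq_inner[symmetric])

lemma cinner_diff_left: "cinner (a - b) c = cinner a c - cinner b c"
  by (simp add: cinner_def left_diff_distrib sum_subtractf)

lemma cinner_diff_right: "cinner a (b - c) = cinner a b - cinner a c"
  by (simp add: cinner_def right_diff_distrib sum_subtractf)

lemma vector_scaleR_component_complex: "(r *\<^sub>R a) $ i = of_real r * (a $ i :: complex)"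
  by (simp only: vector_scaleR_component) (simp add: scaleR_conv_of_real)

lemma cinner_scaleR_left: "cinner (r *\<^sub>R a) c = of_real r * cinner a c"
  by (simp add: cinner_def vector_scaleR_component_complex sum_distrib_left mult.assoc)
    (simp add: scaleR_conv_of_real)

lemma cinner_scaleR_right: "cinner a (r *\<^sub>R c) = of_real r * cinner a c"
  by (simp add: cinner_def vector_scaleR_component_complex sum_distrib_left mult.left_commute)
    (simp add: scaleR_conv_of_real)

lemma cinner_hermitian:
  assumes "hermitian H"
  shows "cinner (H *v a) b = cinner a (H *v b)"
proof -
  have H: "cnj (H$j$i) = H$i$j" for i j
    using arg_cong[OF assms[unfolded hermitian_def], of "\<lambda>M. M$i$j"] by (simp add: cadj_def)
  have "cinner (H *v a) b = (\<Sum>j\<in>UNIV. \<Sum>i\<in>UNIV. cnj (H$j$i) * cnj (a$i) * b$j)"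
    by (simp add: cinner_def matrix_vector_mult_def sum_distrib_right)
  also have "\<dots> = (\<Sum>i\<in>UNIV. \<Sum>j\<in>UNIV. cnj (a$i) * (H$i$j * b$j))"
    by (subst sum.swap) (simp add: H mult.assoc mult.left_commute)
  also have "\<dots> = cinner a (H *v b)"
    by (simp add: cinner_def matrix_vector_mult_def sum_distrib_left)
  finally show ?thesis .
qed

lemma expect_mult_hermitian:
  assumes "hermitian H1"
  shows "expect psi (H1 ** H2) = cinner (H1 *v psi) (H2 *v psi)"
proof -
  have "expect psi (H1 ** H2) = cinner psi (H1 *v (H2 *v psi))"
    by (simp add: expect_eq_cinner matrix_vector_mul_assoc)
  then show ?thesis
    by (simp add: cinner_hermitian[OF assms])
qed

lemma expect_hermitian_real:
  assumes "hermitian H"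
  shows "expect psi H = of_real (Re (expect psi H))"
proof -
  have "cnj (expect psi H) = expect psi H"
    by (simp add: expect_eq_cinner cinner_cnj cinner_hermitian[OF assms])
  then show ?thesis
    by (simp add: complex_eq_iff)
qed

lemma QFIM_formula_gram:
  assumes h1: "hermitian H1" and h2: "hermitian H2" and n: "norm psi = 1"
  defines "u1 \<equiv> H1 *v psi - Re (expect psi H1) *\<^sub>R psi"
    and "u2 \<equiv> H2 *v psi - Re (expect psi H2) *\<^sub>R psi"
  shows "2 * expect psi (acomm H1 H2) - 4 * expect psi H1 * expect psi H2 = of_real (4 * inner u1 u2)"
proof -
  define e1 e2 where "e1 = Re (expect psi H1)" and "e2 = Re (expect psi H2)"
  define c where "c = cinner (H1 *v psi) (H2 *v psi)"
  have E1: "expect psi H1 = of_real e1" and E2: "expect psi H2 = of_real e2"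
    unfolding e1_def e2_def using expect_hermitian_real h1 h2 by blast+
  have "expect psi (acomm H1 H2) = c + cnj c"
    using expect_mult_hermitian[OF h1] expect_mult_hermitian[OF h2]
    by (simp add: acomm_def expect_add c_def cinner_cnj)
  then have "expect psi (acomm H1 H2) = of_real (2 * Re c)"
    by (simp add: complex_add_cnj)
  moreover have "cinner u1 u2 = c - of_real e1 * of_real e2"
    using E1 E2 cinner_self[OF n] cinner_hermitian[OF h1, of psi psi]
    by (simp add: u1_def u2_def e1_def[symmetric] e2_def[symmetric] cinner_diff_left cinner_diff_right
        cinner_scaleR_left cinner_scaleR_right c_def expect_eq_cinner)
  then have "inner u1 u2 = Re c - e1 * e2"
    by (simp flip: Re_cinner)
  ultimately show ?thesis
    by (simp add: E1 E2)
qed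

lemma Uhlmann_formula_real:
  assumes "hermitian H1" and "hermitian H2"
  shows "- 2 * \<i> * expect psi (comm H1 H2) = of_real (4 * Im (cinner (H1 *v psi) (H2 *v psi)))"
proof -
  define c where "c = cinner (H1 *v psi) (H2 *v psi)"
  have "expect psi (comm H1 H2) = c - cnj c"
    using expect_mult_hermitian[OF assms(1)] expect_mult_hermitian[OF assms(2)]
    by (simp add: comm_def expect_diff cinner_cnj c_def)
  also have "\<dots> = of_real (2 * Im c) * \<i>"
    by (rule complex_diff_cnj)
  finally have "- 2 * \<i> * expect psi (comm H1 H2) = of_real (4 * Im c)"
    by simp
  then show ?thesis
    unfolding c_def .
qed

section \<open>Asymptotic incompatibility\<close>

lemma matrix_inv_eqI:
  fixes Q Qi :: "'b::comm_ring_1^'n^'n"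
  assumes "Q ** Qi = mat 1" "Qi ** Q = mat 1"
  shows "matrix_inv Q = Qi"
proof -
  have inv: "matrix_inv Q ** Q = mat 1"
    unfolding matrix_inv_def by (rule someI2[of _ Qi]) (use assms in auto)
  have "matrix_inv Q = matrix_inv Q ** (Q ** Qi)"
    using assms(1) by simp
  also have "\<dots> = Qi"
    by (simp add: matrix_mul_assoc inv)
  finally show ?thesis .
qed

lemma eigenvalue_cmod_of_square_scalar:
  fixes M :: "complex^'n^'n"
  assumes MM: "M ** M = mat (- of_real (r\<^sup>2))" and "r \<ge> 0" and "is_eigenvalue M \<mu>"
  shows "cmod \<mu> = r"
proof -
  obtain v where "v \<noteq> 0" and Mv: "M *v v = \<mu> *s v"
    using \<open>is_eigenvalue M \<mu>\<close> by (auto simp: is_eigenvalue_def)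
  have "M *v (\<mu> *s v) = \<mu> *s (M *v v)"
    by (simp add: vec_eq_iff matrix_vector_mult_def sum_distrib_left mult.left_commute)
  then have "(M ** M) *v v = \<mu>\<^sup>2 *s v"
    by (simp add: Mv power2_eq_square flip: matrix_vector_mul_assoc)
  moreover have mat: "mat c *v w = c *s w" for c :: complex and w :: "complex^'n"
  proof -
    have "(if i = j then c else 0) * w $ j = (if i = j then c * w $ j else 0)" for i j
      by simp
    then show ?thesis
      by (simp add: vec_eq_iff matrix_vector_mult_def mat_def sum.delta)
  qed
  ultimately have "(- of_real (r\<^sup>2)) *s v = \<mu>\<^sup>2 *s v"
    by (simp only: MM mat)
  then have "(- of_real (r\<^sup>2) - \<mu>\<^sup>2) *s v = 0"
    by (metis vector_sub_rdistrib diff_self)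
  then have "\<mu>\<^sup>2 = - of_real (r\<^sup>2)"
    using \<open>v \<noteq> 0\<close> vector_mul_eq_0 by (metis right_minus_eq)
  then have "cmod \<mu> ^ 2 = r\<^sup>2"
    by (metis norm_minus_cancel norm_of_real norm_power power2_abs abs_of_nonneg zero_le_power2)
  then show ?thesis
    using \<open>r \<ge> 0\<close> by (simp add: power2_eq_iff_nonneg)
qed

text \<open>For symmetric \<open>Q\<close> and antisymmetric \<open>D\<close>, \<open>(Q\<^sup>-\<^sup>1D)\<^sup>2\<close> is the
  scalar \<open>-(d\<^sup>2 / det Q)\<close>.\<close>

lemma AI_2x2:
  fixes Q D :: "complex^2^2" and a b c d :: real
  assumes Q: "Q$1$1 = of_real a" "Q$1$2 = of_real b" "Q$2$1 = of_real b" "Q$2$2 = of_real c"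
    and D: "D$1$1 = 0" "D$2$2 = 0" "D$2$1 = of_real d" "D$1$2 = - of_real d"
    and pos: "a * c - b\<^sup>2 > 0"
  shows "complex_of_real (AI Q D) = csqrt (det D / det Q)"
proof -
  define \<Delta> where "\<Delta> = a * c - b\<^sup>2"
  have "\<Delta> > 0"
    using pos by (simp add: \<Delta>_def)
  have \<Delta>: "a * c = \<Delta> + b * b" "c * a = \<Delta> + b * b" "a * (c * w) = \<Delta> * w + b * (b * w)" for w
    by (simp_all add: \<Delta>_def power2_eq_square algebra_simps)
  define Qi :: "complex^2^2" where "Qi = (\<chi> i j. if i = 1 \<and> j = 1 then of_real (c / \<Delta>)
      else if i = 2 \<and> j = 2 then of_real (a / \<Delta>) else of_real (- b / \<Delta>))"
  have Qi: "Qi$1$1 = of_real (c / \<Delta>)" "Qi$1$2 = of_real (- b / \<Delta>)" "Qi$2$1 = of_real (- b / \<Delta>)"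
      "Qi$2$2 = of_real (a / \<Delta>)"
    by (simp_all add: Qi_def)
  have "Q ** Qi = mat 1" "Qi ** Q = mat 1"
    using \<open>\<Delta> > 0\<close> by (simp_all add: vec_eq_iff forall_2 matrix_matrix_mult_def sum_2 Q Qi mat_def
        field_simps \<Delta> flip: of_real_mult of_real_add of_real_diff)
  then have inv: "matrix_inv Q = Qi"
    by (rule matrix_inv_eqI)
  define M where "M = Qi ** D"
  have M: "M$1$1 = of_real (- b * d / \<Delta>)" "M$1$2 = of_real (- c * d / \<Delta>)"
      "M$2$1 = of_real (a * d / \<Delta>)" "M$2$2 = of_real (b * d / \<Delta>)"
    by (simp_all add: M_def matrix_matrix_mult_def sum_2 Qi D)
  define r where "r = sqrt (d\<^sup>2 / \<Delta>)"
  have MM: "M ** M = mat (- of_real (r\<^sup>2))"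
    using \<open>\<Delta> > 0\<close> by (simp add: r_def vec_eq_iff forall_2 matrix_matrix_mult_def sum_2 M mat_def
        field_simps \<Delta> power2_eq_square flip: of_real_mult of_real_add of_real_diff of_real_minus)
  have "cmod \<mu> = r" if "is_eigenvalue M \<mu>" for \<mu>
    by (rule eigenvalue_cmod_of_square_scalar[OF MM _ that]) (use \<open>\<Delta> > 0\<close> in \<open>simp add: r_def\<close>)
  moreover have "is_eigenvalue M (\<i> * of_real (d / sqrt \<Delta>))"
  proof -
    define v :: "complex^2" where "v = vector [of_real c, - of_real b - \<i> * of_real (sqrt \<Delta>)]"
    have "v \<noteq> 0"
      using \<open>\<Delta> > 0\<close> by (auto simp: v_def vec_eq_iff forall_2 complex_eq_iff \<Delta>_def)
    moreover have "M *v v = (\<i> * of_real (d / sqrt \<Delta>)) *s v"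
      using \<open>\<Delta> > 0\<close> by (simp add: vec_eq_iff forall_2 matrix_vector_mult_def sum_2 M v_def field_simps
          complex_eq_iff \<Delta> power2_eq_square)
    ultimately show ?thesis
      unfolding is_eigenvalue_def by blast
  qed
  moreover have "cmod (\<i> * of_real (d / sqrt \<Delta>)) = r"
    using \<open>\<Delta> > 0\<close> by (simp add: r_def norm_mult norm_divide real_sqrt_divide real_sqrt_abs)
  ultimately have "{cmod \<mu> | \<mu>. is_eigenvalue M \<mu>} = {r}"
    by blast
  then have "AI Q D = r"
    by (simp add: AI_def inv flip: M_def)
  moreover have "det D / det Q = of_real (d\<^sup>2 / \<Delta>)"
    by (simp add: det_2 Q D \<Delta>_def power2_eq_square)
  ultimately show ?thesis
    using \<open>\<Delta> > 0\<close> by (simp add: r_def csqrt_of_real \<Delta>_def)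
qed

lemma QFIM_Uhlmann_entries:
  fixes psi :: "complex^'n"
  assumes g1: "gen Jx Jz t B \<theta> 1 = r1 *\<^sub>R A" and g2: "gen Jx Jz t B \<theta> 2 = r2 *\<^sub>R C"
  defines "Q \<equiv> QFIM Jx Jz t psi B \<theta>" and "D \<equiv> Uhlmann Jx Jz t psi B \<theta>"
  shows "Q$1$1 = 4 * (of_real r1)\<^sup>2 * variance psi A"
    and "Q$2$2 = 4 * (of_real r2)\<^sup>2 * variance psi C"
    and "Q$1$2 = 2 * of_real r1 * of_real r2 * (expect psi (acomm A C) - 2 * expect psi A * expect psi C)"
    and "Q$2$1 = Q$1$2"
    and "D$1$1 = 0" and "D$2$2 = 0"
    and "D$2$1 = 2 * \<i> * of_real r1 * of_real r2 * expect psi (comm A C)"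
    and "D$1$2 = - D$2$1"
proof -
  show "Q$1$1 = 4 * (of_real r1)\<^sup>2 * variance psi A"
    unfolding Q_def QFIM_def by (simp only: vec_lambda_beta g1 QFIM_formula_diag variance_scaleR) (simp add: mult.assoc)
  show "Q$2$2 = 4 * (of_real r2)\<^sup>2 * variance psi C"
    unfolding Q_def QFIM_def by (simp only: vec_lambda_beta g2 QFIM_formula_diag variance_scaleR) (simp add: mult.assoc)
  show "Q$1$2 = 2 * of_real r1 * of_real r2 * (expect psi (acomm A C) - 2 * expect psi A * expect psi C)"
    unfolding Q_def QFIM_def by (simp add: g1 g2 acomm_scaleR expect_scaleR algebra_simps)
  show "Q$2$1 = Q$1$2"
    unfolding Q_def QFIM_def by (simp add: acomm_commute)
  show "D$1$1 = 0" "D$2$2 = 0"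
    unfolding D_def Uhlmann_def by (simp_all add: comm_def expect_zero)
  show "D$2$1 = 2 * \<i> * of_real r1 * of_real r2 * expect psi (comm A C)"
    unfolding D_def Uhlmann_def by (simp add: g1 g2 comm_scaleR expect_scaleR comm_anticommute[of C] expect_uminus)
  show "D$1$2 = - D$2$1"
    unfolding D_def Uhlmann_def by (simp add: comm_anticommute[of "gen Jx Jz t B \<theta> 2"] expect_uminus)
qed

context su2_matrices
begin

lemma hermitian_gen: "hermitian (gen Jx Jz t B \<theta> l)"
proof (cases "l = 1")
  case True
  then show ?thesis
    using gen_scale hermitian_scaleR[OF hermitian_Jdir] by metis
next
  case False
  then have "l = 2"
    by (metis exhaust_2)
  then show ?thesis
    using gen_angle hermitian_scaleR[OF hermitian_Jdir] by metis
qed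

lemma AI_QFIM_Uhlmann:
  fixes psi :: "complex^'a" and t B \<theta> :: real
  defines "Q \<equiv> QFIM Jx Jz t psi B \<theta>" and "D \<equiv> Uhlmann Jx Jz t psi B \<theta>"
  assumes "norm psi = 1" and "det Q \<noteq> 0"
  shows "complex_of_real (AI Q D) = csqrt (det D / det Q)"
proof -
  let ?H = "gen Jx Jz t B \<theta>"
  define u where "u l = ?H l *v psi - Re (expect psi (?H l)) *\<^sub>R psi" for l
  define w where "w l l' = Im (cinner (?H l *v psi) (?H l' *v psi))" for l l'
  have Q: "Q $ l $ l' = of_real (4 * inner (u l) (u l'))" for l l'
    unfolding Q_def QFIM_def u_def using QFIM_formula_gram[OF hermitian_gen hermitian_gen \<open>norm psi = 1\<close>] by simp
  have D: "D $ l $ l' = of_real (4 * w l l')" for l l'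
    unfolding D_def Uhlmann_def w_def using Uhlmann_formula_real[OF hermitian_gen hermitian_gen] by simp
  have "w l l = 0" for l
    using cinner_cnj[of "?H l *v psi" "?H l *v psi"] by (simp add: w_def complex_eq_iff)
  moreover have "w 1 2 = - w 2 1"
    using cinner_cnj[of "?H 1 *v psi" "?H 2 *v psi"] by (simp add: w_def complex_eq_iff)
  moreover have "(4 * inner (u 1) (u 1)) * (4 * inner (u 2) (u 2)) - (4 * inner (u 1) (u 2))\<^sup>2 > 0"
  proof -
    have "det Q = of_real ((4 * inner (u 1) (u 1)) * (4 * inner (u 2) (u 2)) - (4 * inner (u 1) (u 2))\<^sup>2)"
      by (simp add: det_2 Q inner_commute power2_eq_square)
    then have "(4 * inner (u 1) (u 1)) * (4 * inner (u 2) (u 2)) - (4 * inner (u 1) (u 2))\<^sup>2 \<noteq> 0"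
      using \<open>det Q \<noteq> 0\<close> by (metis of_real_0)
    moreover have "(inner (u 1) (u 2))\<^sup>2 \<le> inner (u 1) (u 1) * inner (u 2) (u 2)"
      by (rule Cauchy_Schwarz_ineq)
    ultimately show ?thesis
      by (simp add: power2_eq_square algebra_simps)
  qed
  ultimately show ?thesis
    by (intro AI_2x2[where a = "4 * inner (u 1) (u 1)" and b = "4 * inner (u 1) (u 2)"
          and c = "4 * inner (u 2) (u 2)" and d = "4 * w 2 1"]) (simp_all add: Q D inner_commute)
qed

end

theorem mainTheorem3:
  fixes Jx Jy Jz :: "complex^'n^'n" and psi0 :: "complex^'n"
    and t B \<theta> :: real
  assumes herm: "hermitian Jx" "hermitian Jy" "hermitian Jz"
    and su2: "comm Jx Jy = cscale \<i> Jz" "comm Jy Jz = cscale \<i> Jx" "comm Jz Jx = cscale \<i> Jy"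
    and unit: "norm psi0 = 1"
  defines "n\<theta> \<equiv> vector [cos \<theta>, 0, sin \<theta>] :: real^3"
    and "n1 \<equiv> vector [cos (B*t/2) * sin \<theta>, - sin (B*t/2), - cos (B*t/2) * cos \<theta>] :: real^3"
    and "Q \<equiv> QFIM Jx Jz t psi0 B \<theta>"
    and "D \<equiv> Uhlmann Jx Jz t psi0 B \<theta>"
  shows
    "(Q$1$1 = 4 * (of_real t)^2 * variance psi0 (Jdir Jx Jy Jz n\<theta>))
     \<and> (Q$2$2 = 16 * (of_real (sin (B*t/2)))^2 * variance psi0 (Jdir Jx Jy Jz n1))
     \<and> (Q$1$2 = - 4 * of_real t * of_real (sin (B*t/2)) *
       (expect psi0 (acomm (Jdir Jx Jy Jz n1) (Jdir Jx Jy Jz n\<theta>))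
        - 2 * expect psi0 (Jdir Jx Jy Jz n1) * expect psi0 (Jdir Jx Jy Jz n\<theta>)))
     \<and> (Q$2$1 = Q$1$2)
     \<and> (D$1$1 = 0) \<and> (D$2$2 = 0)
     \<and> (D$2$1 = 4 * of_real t * of_real (sin (B*t/2)) * expect psi0 (Jdir Jx Jy Jz (cross3 n\<theta> n1)))
     \<and> (D$1$2 = - D$2$1)
     \<and> (det D = 16 * (of_real t)^2 * (of_real (sin (B*t/2)))^2 * (expect psi0 (Jdir Jx Jy Jz (cross3 n\<theta> n1)))^2)
     \<and> (det Q = 16 * (of_real t)^2 * (of_real (sin (B*t/2)))^2 *
       (4 * variance psi0 (Jdir Jx Jy Jz n\<theta>) * variance psi0 (Jdir Jx Jy Jz n1)
        - (expect psi0 (acomm (Jdir Jx Jy Jz n1) (Jdir Jx Jy Jz n\<theta>))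
           - 2 * expect psi0 (Jdir Jx Jy Jz n1) * expect psi0 (Jdir Jx Jy Jz n\<theta>))^2))
     \<and> (det Q \<noteq> 0 \<longrightarrow> complex_of_real (AI Q D) = csqrt (det D / det Q))"
proof -
  interpret su2_matrices Jx Jy Jz
    using herm su2 by unfold_locales
  have g1: "gen Jx Jz t B \<theta> 1 = (- t) *\<^sub>R Jdir Jx Jy Jz n\<theta>"
    unfolding n\<theta>_def by (rule gen_scale)
  have g2: "gen Jx Jz t B \<theta> 2 = (2 * sin (B * t / 2)) *\<^sub>R Jdir Jx Jy Jz n1"
    unfolding n1_def by (rule gen_angle)
  note entries = QFIM_Uhlmann_entries[OF g1 g2, where psi = psi0, folded Q_def D_def]
  have Q: "Q$1$1 = 4 * (of_real t)^2 * variance psi0 (Jdir Jx Jy Jz n\<theta>)"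
      "Q$2$2 = 16 * (of_real (sin (B*t/2)))^2 * variance psi0 (Jdir Jx Jy Jz n1)"
      "Q$1$2 = - 4 * of_real t * of_real (sin (B*t/2)) *
         (expect psi0 (acomm (Jdir Jx Jy Jz n1) (Jdir Jx Jy Jz n\<theta>))
          - 2 * expect psi0 (Jdir Jx Jy Jz n1) * expect psi0 (Jdir Jx Jy Jz n\<theta>))"
      "Q$2$1 = Q$1$2"
    and D: "D$1$1 = 0" "D$2$2 = 0"
      "D$2$1 = 4 * of_real t * of_real (sin (B*t/2)) * expect psi0 (Jdir Jx Jy Jz (cross3 n\<theta> n1))"
      "D$1$2 = - D$2$1"
    using entries by (simp_all add: acomm_commute comm_Jdir expect_cscale power2_eq_square algebra_simps)
  moreover have "det D = 16 * (of_real t)^2 * (of_real (sin (B*t/2)))^2 * (expect psi0 (Jdir Jx Jy Jz (cross3 n\<theta> n1)))^2"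
    by (simp add: det_2 D power2_eq_square algebra_simps)
  moreover have "det Q = 16 * (of_real t)^2 * (of_real (sin (B*t/2)))^2 *
       (4 * variance psi0 (Jdir Jx Jy Jz n\<theta>) * variance psi0 (Jdir Jx Jy Jz n1)
        - (expect psi0 (acomm (Jdir Jx Jy Jz n1) (Jdir Jx Jy Jz n\<theta>))
           - 2 * expect psi0 (Jdir Jx Jy Jz n1) * expect psi0 (Jdir Jx Jy Jz n\<theta>))^2)"
    by (simp add: det_2 Q power2_eq_square algebra_simps)
  moreover have "det Q \<noteq> 0 \<longrightarrow> complex_of_real (AI Q D) = csqrt (det D / det Q)"
    using AI_QFIM_Uhlmann[OF unit] by (simp add: Q_def D_def)
  ultimately show ?thesis
    by blast
qed

end
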